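(* Assume Assumption 1, Assumption 2 and the null hypothesis $H_0:\ T_i(1)=T_i(0)$ for all $i$, and condition on $\boldsymbol{T}(1),\boldsymbol{T}(0)$. Then for any time $t\ge 0$ and integers $A,B$, $$\Pr\{\overline{D}_1(t)=A,\overline{N}_1(t)=B\mid\boldsymbol{T}(1),\boldsymbol{T}(0),\Delta_i\mathbb{1}(W_i=t),\mathbb{1}(W_i\ge t),1\le i\le n\}=\binom{\overline{D}(t)}{A}\binom{\overline{N}(t)-\overline{D}(t)}{B-A}\{\phi(t)\}^B\{1-\phi(t)\}^{\overline{N}(t)-B}.$$
   Context: There are $n$ units. Unit $i$ has potential event times $T_i(1),T_i(0)\ge 0$, potential censoring times $C_i(1),C_i(0)\in[0,\infty]$, and treatment indicator $Z_i\in\{0,1\}$; bold letters denote $n$-vectors. Assumption 1: conditional on $\boldsymbol{T}(1),\boldsymbol{T}(0),\boldsymbol{C}(1),\boldsymbol{C}(0)$, the $Z_i$ are i.i.d. Bernoulli$(p_1)$, $p_1=1-p_0\in(0,1)$. Assumption 2: $(\boldsymbol{C}(1),\boldsymbol{C}(0))$ is independent of $(\boldsymbol{T}(1),\boldsymbol{T}(0))$ and the pairs $(C_i(1),C_i(0))$ are i.i.d. across $i$. $G_z(c)=\Pr(C_i(z)\ge c)$, $\phi(t)=p_1G_1(t)/\{p_1G_1(t)+p_0G_0(t)\}$. Realized: $T_i=Z_iT_i(1)+(1-Z_i)T_i(0)$, $C_i=Z_iC_i(1)+(1-Z_i)C_i(0)$, $W_i=\min\{T_i,C_i\}$, $\Delta_i=\mathbb{1}(T_i\le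 C_i)$. $\overline{N}_1(t)=\sum_iZ_i\mathbb{1}(W_i\ge t)$, $\overline{N}(t)=\sum_i\mathbb{1}(W_i\ge t)$, $\overline{D}_1(t)=\sum_iZ_i\Delta_i\mathbb{1}(W_i=t)$, $\overline{D}(t)=\sum_i\Delta_i\mathbb{1}(W_i=t)$. Binomial coefficients $\binom{a}{b}$ are $0$ when $b<0$ or $b>a$. *)

theory Defs
  imports "HOL-Probability.Probability"
begin

(* Potential event times T1 i, T0 i are fixed reals
   (we condition on them); censoring times are ennreal-valued random variables (values in [0,\<infinity>]);
   Z i \<omega> = True encodes Z_i = 1. *)

definition Tobs :: "(nat \<Rightarrow> real) \<Rightarrow> (nat \<Rightarrow> real) \<Rightarrow> (nat \<Rightarrow> 'a \<Rightarrow> bool) \<Rightarrow> nat \<Rightarrow> 'a \<Rightarrow> real" where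
  "Tobs T1 T0 Z i \<omega> = (if Z i \<omega> then T1 i else T0 i)"

definition Cobs :: "(nat \<Rightarrow> 'a \<Rightarrow> ennreal) \<Rightarrow> (nat \<Rightarrow> 'a \<Rightarrow> ennreal) \<Rightarrow> (nat \<Rightarrow> 'a \<Rightarrow> bool) \<Rightarrow> nat \<Rightarrow> 'a \<Rightarrow> ennreal" where
  "Cobs C1 C0 Z i \<omega> = (if Z i \<omega> then C1 i \<omega> else C0 i \<omega>)"

definition Wobs :: "(nat \<Rightarrow> real) \<Rightarrow> (nat \<Rightarrow> real) \<Rightarrow> (nat \<Rightarrow> 'a \<Rightarrow> ennreal) \<Rightarrow> (nat \<Rightarrow> 'a \<Rightarrow> ennreal) \<Rightarrow> (nat \<Rightarrow> 'a \<Rightarrow> bool) \<Rightarrow> nat \<Rightarrow> 'a \<Rightarrow> ennreal" where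
  "Wobs T1 T0 C1 C0 Z i \<omega> = min (ennreal (Tobs T1 T0 Z i \<omega>)) (Cobs C1 C0 Z i \<omega>)"

definition Dobs :: "(nat \<Rightarrow> real) \<Rightarrow> (nat \<Rightarrow> real) \<Rightarrow> (nat \<Rightarrow> 'a \<Rightarrow> ennreal) \<Rightarrow> (nat \<Rightarrow> 'a \<Rightarrow> ennreal) \<Rightarrow> (nat \<Rightarrow> 'a \<Rightarrow> bool) \<Rightarrow> nat \<Rightarrow> 'a \<Rightarrow> bool" where
  "Dobs T1 T0 C1 C0 Z i \<omega> = (ennreal (Tobs T1 T0 Z i \<omega>) \<le> Cobs C1 C0 Z i \<omega>)"

definition obs_ind :: "(nat \<Rightarrow> real) \<Rightarrow> (nat \<Rightarrow> real) \<Rightarrow> (nat \<Rightarrow> 'a \<Rightarrow> ennreal) \<Rightarrow> (nat \<Rightarrow> 'a \<Rightarrow> ennreal) \<Rightarrow> (nat \<Rightarrow> 'a \<Rightarrow> bool) \<Rightarrow> real \<Rightarrow> nat \<Rightarrow> 'a \<Rightarrow> bool \<times> bool" where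
  "obs_ind T1 T0 C1 C0 Z t i \<omega> =
     (Dobs T1 T0 C1 C0 Z i \<omega> \<and> Wobs T1 T0 C1 C0 Z i \<omega> = ennreal t,
      Wobs T1 T0 C1 C0 Z i \<omega> \<ge> ennreal t)"

definition Nbar1 :: "nat \<Rightarrow> (nat \<Rightarrow> real) \<Rightarrow> (nat \<Rightarrow> real) \<Rightarrow> (nat \<Rightarrow> 'a \<Rightarrow> ennreal) \<Rightarrow> (nat \<Rightarrow> 'a \<Rightarrow> ennreal) \<Rightarrow> (nat \<Rightarrow> 'a \<Rightarrow> bool) \<Rightarrow> real \<Rightarrow> 'a \<Rightarrow> nat" where
  "Nbar1 n T1 T0 C1 C0 Z t \<omega> = card {i\<in>{..<n}. Z i \<omega> \<and> Wobs T1 T0 C1 C0 Z i \<omega> \<ge> ennreal t}"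

definition Nbar :: "nat \<Rightarrow> (nat \<Rightarrow> real) \<Rightarrow> (nat \<Rightarrow> real) \<Rightarrow> (nat \<Rightarrow> 'a \<Rightarrow> ennreal) \<Rightarrow> (nat \<Rightarrow> 'a \<Rightarrow> ennreal) \<Rightarrow> (nat \<Rightarrow> 'a \<Rightarrow> bool) \<Rightarrow> real \<Rightarrow> 'a \<Rightarrow> nat" where
  "Nbar n T1 T0 C1 C0 Z t \<omega> = card {i\<in>{..<n}. Wobs T1 T0 C1 C0 Z i \<omega> \<ge> ennreal t}"

definition Dbar1 :: "nat \<Rightarrow> (nat \<Rightarrow> real) \<Rightarrow> (nat \<Rightarrow> real) \<Rightarrow> (nat \<Rightarrow> 'a \<Rightarrow> ennreal) \<Rightarrow> (nat \<Rightarrow> 'a \<Rightarrow> ennreal) \<Rightarrow> (nat \<Rightarrow> 'a \<Rightarrow> bool) \<Rightarrow> real \<Rightarrow> 'a \<Rightarrow> nat" where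
  "Dbar1 n T1 T0 C1 C0 Z t \<omega> = card {i\<in>{..<n}. Z i \<omega> \<and> Dobs T1 T0 C1 C0 Z i \<omega> \<and> Wobs T1 T0 C1 C0 Z i \<omega> = ennreal t}"

definition Dbar :: "nat \<Rightarrow> (nat \<Rightarrow> real) \<Rightarrow> (nat \<Rightarrow> real) \<Rightarrow> (nat \<Rightarrow> 'a \<Rightarrow> ennreal) \<Rightarrow> (nat \<Rightarrow> 'a \<Rightarrow> ennreal) \<Rightarrow> (nat \<Rightarrow> 'a \<Rightarrow> bool) \<Rightarrow> real \<Rightarrow> 'a \<Rightarrow> nat" where
  "Dbar n T1 T0 C1 C0 Z t \<omega> = card {i\<in>{..<n}. Dobs T1 T0 C1 C0 Z i \<omega> \<and> Wobs T1 T0 C1 C0 Z i \<omega> = ennreal t}"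

(* G_1(c) = Pr(C_i(1) \<ge> c), G_0(c) = Pr(C_i(0) \<ge> c), read off the common law Q of (C_i(1), C_i(0)) *)
definition G1 :: "(ennreal \<times> ennreal) measure \<Rightarrow> ennreal \<Rightarrow> real" where
  "G1 Q c = measure Q {x \<in> space Q. fst x \<ge> c}"

definition G0 :: "(ennreal \<times> ennreal) measure \<Rightarrow> ennreal \<Rightarrow> real" where
  "G0 Q c = measure Q {x \<in> space Q. snd x \<ge> c}"

definition phi :: "real \<Rightarrow> (ennreal \<times> ennreal) measure \<Rightarrow> real \<Rightarrow> real" where
  "phi p1 Q t = p1 * G1 Q (ennreal t) / (p1 * G1 Q (ennreal t) + (1 - p1) * G0 Q (ennreal t))"

definition binom_int :: "int \<Rightarrow> int \<Rightarrow> real" where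
  "binom_int a b = (if 0 \<le> b \<and> b \<le> a then real (nat a choose nat b) else 0)"

end

theory Submission
  imports Defs
begin

(* Under H0 the event times are fixed, so unit i is observed at risk at t iff T_i >= t and
   C_i >= t, and observed to fail at t iff in addition T_i = t.  The conditioning therefore fixes,
   for every unit with T_i >= t, whether C_i >= t.  Units are independent, and within a unit
   P(Z_i = 1, C_i >= t) = p1 G1(t) and P(Z_i = 0, C_i >= t) = p0 G0(t), so given C_i >= t the unit
   is treated with probability phi(t), independently of the others.  Hence, given the observed
   indicators, Dbar1(t) and Nbar1(t) - Dbar1(t) are independent binomials with Dbar(t) and
   Nbar(t) - Dbar(t) trials.  Formally this is an induction adding one unit at a time, each step
   being Pascal's rule for the binomial weights. *)

section \<open>Independent finite-valued random variables\<close>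

lemma sets_PiM_count_space_finite:
  assumes "finite J" "X \<subseteq> space (PiM J (\<lambda>_. count_space (UNIV :: 'b::finite set)))"
  shows "X \<in> sets (PiM J (\<lambda>_. count_space (UNIV :: 'b set)))"
proof -
  have "PiE J (\<lambda>i. {x i}) = {x}" if "x \<in> X" for x
    using assms(2) that by (intro PiE_singleton) (auto simp: space_PiM PiE_def)
  then have "X = (\<Union>x\<in>X. PiE J (\<lambda>i. {x i}))"
    by auto
  also have "\<dots> \<in> sets (PiM J (\<lambda>_. count_space UNIV))"
  proof (rule sets.finite_UN)
    have "finite (space (PiM J (\<lambda>_. count_space (UNIV :: 'b set))))"
      using assms(1) by (simp add: space_PiM finite_PiE)
    then show "finite X"
      using assms(2) by (rule finite_subset[rotated])
  qed (auto intro: sets_PiM_I_finite assms(1))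
  finally show ?thesis .
qed

lemma (in prob_space) events_Collect_finitely_determined:
  fixes Y :: "'i \<Rightarrow> 'a \<Rightarrow> 'b::finite"
  assumes Y: "\<And>i. i \<in> J \<Longrightarrow> random_variable (count_space UNIV) (Y i)" and J: "finite J"
    and local: "\<And>y y'. (\<And>i. i \<in> J \<Longrightarrow> y i = y' i) \<Longrightarrow> P y = P y'"
  shows "{\<omega> \<in> space M. P (\<lambda>i. Y i \<omega>)} \<in> events"
proof -
  let ?S = "{y \<in> space (PiM J (\<lambda>_. count_space UNIV)). P y}"
  have "?S \<in> sets (PiM J (\<lambda>_. count_space UNIV))"
    using J by (auto intro: sets_PiM_count_space_finite)
  then have "(\<lambda>\<omega>. \<lambda>i\<in>J. Y i \<omega>) -` ?S \<inter> space M \<in> events"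
    using Y by (intro measurable_sets[OF measurable_restrict])
  moreover have "P (\<lambda>i\<in>J. Y i \<omega>) = P (\<lambda>i. Y i \<omega>)" for \<omega>
    by (rule local) simp
  ultimately show ?thesis
    by (simp add: space_PiM vimage_def Int_def conj_commute)
qed

lemma (in prob_space) prob_indep_vars_conj:
  fixes Y :: "'i \<Rightarrow> 'a \<Rightarrow> 'b::finite"
  assumes indep: "indep_vars (\<lambda>_. count_space UNIV) Y I"
    and J: "finite J" "J \<subseteq> I" and k: "k \<in> I" "k \<notin> J"
    and local: "\<And>y y'. (\<And>i. i \<in> J \<Longrightarrow> y i = y' i) \<Longrightarrow> P y = P y'"
  shows "prob {\<omega> \<in> space M. P (\<lambda>i. Y i \<omega>) \<and> Q (Y k \<omega>)}
    = prob {\<omega> \<in> space M. P (\<lambda>i. Y i \<omega>)} * prob {\<omega> \<in> space M. Q (Y k \<omega>)}"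
proof -
  let ?YJ = "\<lambda>\<omega>. \<lambda>i\<in>J. Y i \<omega>" and ?Yk = "\<lambda>\<omega>. \<lambda>i\<in>{k}. Y i \<omega>"
  let ?SJ = "{y \<in> space (PiM J (\<lambda>_. count_space UNIV)). P y}"
  let ?Sk = "{y \<in> space (PiM {k} (\<lambda>_. count_space UNIV)). Q (y k)}"
  have "indep_var (PiM J (\<lambda>_. count_space UNIV)) ?YJ (PiM {k} (\<lambda>_. count_space UNIV)) ?Yk"
    using J k by (intro indep_var_restrict[OF indep]) auto
  then have "prob ((\<lambda>\<omega>. (?YJ \<omega>, ?Yk \<omega>)) -` (?SJ \<times> ?Sk) \<inter> space M)
      = prob (?YJ -` ?SJ \<inter> space M) * prob (?Yk -` ?Sk \<inter> space M)"
    using J by (intro indep_varD) (auto intro: sets_PiM_count_space_finite)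
  moreover have "\<And>\<omega>. P (?YJ \<omega>) = P (\<lambda>i. Y i \<omega>)"
    by (rule local) simp
  ultimately show ?thesis
    by (simp add: space_PiM vimage_def Int_def conj_commute)
qed

lemma (in prob_space) prob_indep_vars_total_probability:
  fixes Y :: "'i \<Rightarrow> 'a \<Rightarrow> 'b::finite"
  assumes indep: "indep_vars (\<lambda>_. count_space UNIV) Y I"
    and J: "finite J" "J \<subseteq> I" and k: "k \<in> I" "k \<notin> J"
    and local: "\<And>y y' v. (\<And>i. i \<in> J \<Longrightarrow> y i = y' i) \<Longrightarrow> P y v = P y' v"
  shows "prob {\<omega> \<in> space M. P (\<lambda>i. Y i \<omega>) (Y k \<omega>)}
    = (\<Sum>v\<in>UNIV. prob {\<omega> \<in> space M. P (\<lambda>i. Y i \<omega>) v} * prob {\<omega> \<in> space M. Y k \<omega> = v})"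
proof -
  have rv: "random_variable (count_space UNIV) (Y i)" if "i \<in> insert k J" for i
    using indep that J k by (auto simp: indep_vars_def)
  have fin: "finite (insert k J)"
    using J by simp
  have local_k: "(P y v \<and> y k = v) = (P y' v \<and> y' k = v)" "P y (y k) = P y' (y' k)"
    if "\<And>i. i \<in> insert k J \<Longrightarrow> y i = y' i" for y y' v
  proof -
    have "P y w = P y' w" for w
      by (rule local) (simp add: that)
    moreover have "y k = y' k"
      by (simp add: that)
    ultimately show "(P y v \<and> y k = v) = (P y' v \<and> y' k = v)" "P y (y k) = P y' (y' k)"
      by simp_all
  qed
  have "prob {\<omega> \<in> space M. P (\<lambda>i. Y i \<omega>) (Y k \<omega>)}
      = (\<Sum>v\<in>UNIV. prob {\<omega> \<in> space M. P (\<lambda>i. Y i \<omega>) v \<and> Y k \<omega> = v})"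
  proof (rule prob_sum)
    show "{\<omega> \<in> space M. P (\<lambda>i. Y i \<omega>) v \<and> Y k \<omega> = v} \<in> events" for v
      using fin by (intro events_Collect_finitely_determined[where J = "insert k J"] rv local_k)
    show "{\<omega> \<in> space M. P (\<lambda>i. Y i \<omega>) (Y k \<omega>)} \<in> events"
      using fin by (intro events_Collect_finitely_determined[where J = "insert k J"] rv local_k)
  next
    show "AE x in M. (\<forall>v\<in>UNIV. P (\<lambda>i. Y i x) v \<and> Y k x = v \<longrightarrow> P (\<lambda>i. Y i x) (Y k x)) \<and>
        (P (\<lambda>i. Y i x) (Y k x) \<longrightarrow> (\<exists>!v\<in>UNIV. P (\<lambda>i. Y i x) v \<and> Y k x = v))"
      by (rule AE_I2) blast
  qed simp
  also have "\<dots> = (\<Sum>v\<in>UNIV. prob {\<omega> \<in> space M. P (\<lambda>i. Y i \<omega>) v} * prob {\<omega> \<in> space M. Y k \<omega> = v})"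
  proof (rule sum.cong[OF refl])
    fix v
    show "prob {\<omega> \<in> space M. P (\<lambda>i. Y i \<omega>) v \<and> Y k \<omega> = v}
        = prob {\<omega> \<in> space M. P (\<lambda>i. Y i \<omega>) v} * prob {\<omega> \<in> space M. Y k \<omega> = v}"
      by (rule prob_indep_vars_conj[OF indep J k, where P = "\<lambda>y. P y v" and Q = "\<lambda>x. x = v"])
        (rule local)
  qed
  finally show ?thesis .
qed

lemma (in prob_space) prob_indep_vars_Collect_all:
  assumes indep: "indep_vars M' X I" and J: "finite J" "J \<subseteq> I"
    and A: "\<And>j. j \<in> J \<Longrightarrow> A j \<in> sets (M' j)"
  shows "prob {\<omega> \<in> space M. \<forall>j\<in>J. X j \<omega> \<in> A j} = (\<Prod>j\<in>J. prob {\<omega> \<in> space M. X j \<omega> \<in> A j})"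
proof (cases "J = {}")
  case True
  then show ?thesis by (simp add: prob_space)
next
  case False
  have "prob (\<Inter>j\<in>J. X j -` A j \<inter> space M) = (\<Prod>j\<in>J. prob (X j -` A j \<inter> space M))"
    using False J A by (intro indep_varsD[OF indep])
  moreover have "(\<Inter>j\<in>J. X j -` A j \<inter> space M) = {\<omega> \<in> space M. \<forall>j\<in>J. X j \<omega> \<in> A j}"
    using False by auto
  ultimately show ?thesis
    by (simp add: vimage_def Int_def conj_commute)
qed

context prob_space
begin

context
  fixes I :: "'i set" and M1 :: "'i \<Rightarrow> 'b measure" and M2 :: "'i \<Rightarrow> 'c measure"
    and X :: "'i \<Rightarrow> 'a \<Rightarrow> 'b" and Y :: "'i \<Rightarrow> 'a \<Rightarrow> 'c"
  assumes I: "finite I" and X: "indep_vars M1 X I" and Y: "indep_vars M2 Y I"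
    and XY: "\<forall>S \<in> sets (PiM I M1). \<forall>R \<in> sets (PiM I M2).
      prob {\<omega> \<in> space M. (\<lambda>i\<in>I. X i \<omega>) \<in> S \<and> (\<lambda>i\<in>I. Y i \<omega>) \<in> R}
      = prob {\<omega> \<in> space M. (\<lambda>i\<in>I. X i \<omega>) \<in> S} * prob {\<omega> \<in> space M. (\<lambda>i\<in>I. Y i \<omega>) \<in> R}"
begin

lemma prob_components_in_rectangles:
  assumes a: "\<And>i. i \<in> I \<Longrightarrow> a i \<in> sets (M1 i)" and b: "\<And>i. i \<in> I \<Longrightarrow> b i \<in> sets (M2 i)"
  shows "prob {\<omega> \<in> space M. \<forall>i\<in>I. X i \<omega> \<in> a i \<and> Y i \<omega> \<in> b i}
    = (\<Prod>i\<in>I. prob {\<omega> \<in> space M. X i \<omega> \<in> a i} * prob {\<omega> \<in> space M. Y i \<omega> \<in> b i})"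
proof -
  have "{\<omega> \<in> space M. \<forall>i\<in>I. X i \<omega> \<in> a i \<and> Y i \<omega> \<in> b i}
      = {\<omega> \<in> space M. (\<lambda>i\<in>I. X i \<omega>) \<in> PiE I a \<and> (\<lambda>i\<in>I. Y i \<omega>) \<in> PiE I b}"
    by auto
  also have "prob \<dots> = prob {\<omega> \<in> space M. (\<lambda>i\<in>I. X i \<omega>) \<in> PiE I a}
      * prob {\<omega> \<in> space M. (\<lambda>i\<in>I. Y i \<omega>) \<in> PiE I b}"
    by (rule XY[rule_format]) (use I a b in \<open>auto intro: sets_PiM_I_finite\<close>)
  also have "\<dots> = (\<Prod>i\<in>I. prob {\<omega> \<in> space M. X i \<omega> \<in> a i}) * (\<Prod>i\<in>I. prob {\<omega> \<in> space M. Y i \<omega> \<in> b i})"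
    using prob_indep_vars_Collect_all[OF X I order_refl a] prob_indep_vars_Collect_all[OF Y I order_refl b]
    by (simp add: restrict_PiE_iff Pi_iff)
  finally show ?thesis
    by (simp add: prod.distrib)
qed

lemma prob_component_in_rectangle:
  assumes j: "j \<in> I" and a: "a \<in> sets (M1 j)" and b: "b \<in> sets (M2 j)"
  shows "prob {\<omega> \<in> space M. X j \<omega> \<in> a \<and> Y j \<omega> \<in> b}
    = prob {\<omega> \<in> space M. X j \<omega> \<in> a} * prob {\<omega> \<in> space M. Y j \<omega> \<in> b}"
proof -
  define a' where "a' i = (if i = j then a else space (M1 i))" for i
  define b' where "b' i = (if i = j then b else space (M2 i))" for i
  have rv: "X i \<in> measurable M (M1 i)" "Y i \<in> measurable M (M2 i)" if "i \<in> I" for i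
    using X Y that by (auto simp: indep_vars_def)
  have "{\<omega> \<in> space M. \<forall>i\<in>I. X i \<omega> \<in> a' i \<and> Y i \<omega> \<in> b' i} = {\<omega> \<in> space M. X j \<omega> \<in> a \<and> Y j \<omega> \<in> b}"
    using j by (auto simp: a'_def b'_def intro: measurable_space[OF rv(1)] measurable_space[OF rv(2)])
  moreover have "prob {\<omega> \<in> space M. X i \<omega> \<in> a' i} * prob {\<omega> \<in> space M. Y i \<omega> \<in> b' i}
      = (if i = j then prob {\<omega> \<in> space M. X j \<omega> \<in> a} * prob {\<omega> \<in> space M. Y j \<omega> \<in> b} else 1)"
    if "i \<in> I" for i
  proof -
    have "{\<omega> \<in> space M. X i \<omega> \<in> space (M1 i)} = space M" "{\<omega> \<in> space M. Y i \<omega> \<in> space (M2 i)} = space M"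
      using measurable_space[OF rv(1)[OF that]] measurable_space[OF rv(2)[OF that]] by auto
    then show ?thesis
      by (simp add: a'_def b'_def prob_space)
  qed
  ultimately show ?thesis
    using prob_components_in_rectangles[of a' b'] a b j I
    by (simp add: a'_def b'_def prod.delta cong: prod.cong)
qed

lemma indep_vars_Pair:
  "indep_vars (\<lambda>i. M1 i \<Otimes>\<^sub>M M2 i) (\<lambda>i \<omega>. (X i \<omega>, Y i \<omega>)) I"
proof (cases "I = {}")
  case True
  then show ?thesis by (simp add: indep_vars_def indep_sets_def)
next
  case False
  let ?E = "\<lambda>i. {a \<times> b | a b. a \<in> sets (M1 i) \<and> b \<in> sets (M2 i)}"
  have rv: "X i \<in> measurable M (M1 i)" "Y i \<in> measurable M (M2 i)" if "i \<in> I" for i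
    using X Y that by (auto simp: indep_vars_def)
  have "prob (\<Inter>i\<in>I. (\<lambda>\<omega>. (X i \<omega>, Y i \<omega>)) -` A i \<inter> space M)
      = (\<Prod>i\<in>I. prob ((\<lambda>\<omega>. (X i \<omega>, Y i \<omega>)) -` A i \<inter> space M))" if A: "A \<in> Pi I ?E" for A
  proof -
    obtain a b where A_eq: "\<And>i. i \<in> I \<Longrightarrow> A i = a i \<times> b i"
      and a: "\<And>i. i \<in> I \<Longrightarrow> a i \<in> sets (M1 i)" and b: "\<And>i. i \<in> I \<Longrightarrow> b i \<in> sets (M2 i)"
      using A by (simp add: Pi_iff) metis
    have pre: "(\<lambda>\<omega>. (X i \<omega>, Y i \<omega>)) -` A i \<inter> space M = {\<omega> \<in> space M. X i \<omega> \<in> a i \<and> Y i \<omega> \<in> b i}"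
      if "i \<in> I" for i
      using A_eq[OF that] by auto
    have "(\<Inter>i\<in>I. (\<lambda>\<omega>. (X i \<omega>, Y i \<omega>)) -` A i \<inter> space M)
        = {\<omega> \<in> space M. \<forall>i\<in>I. X i \<omega> \<in> a i \<and> Y i \<omega> \<in> b i}"
      using False by (auto simp: pre)
    then show ?thesis
      using a b by (simp add: pre prob_components_in_rectangles prob_component_in_rectangle cong: prod.cong)
  qed
  then show ?thesis
    using False I rv
    by (subst indep_vars_finite[where E = ?E])
       (auto simp: sets_pair_measure space_pair_measure Int_stable_pair_measure_generator
         pair_measure_closed intro: measurable_Pair)
qed

end

end

section \<open>Binomial weights\<close>

lemma binom_int_nonzeroD: "binom_int a b \<noteq> 0 \<Longrightarrow> 0 \<le> b \<and> b \<le> a"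
  by (simp add: binom_int_def split: if_splits)

lemma binom_int_of_nat: "binom_int (int m) j = (if 0 \<le> j then real (m choose nat j) else 0)"
  by (auto simp: binom_int_def binomial_eq_0)

lemma binom_int_plus1:
  assumes "0 \<le> m"
  shows "binom_int (m + 1) j = binom_int m (j - 1) + binom_int m j"
proof -
  obtain k where m: "m = int k"
    using assms nonneg_eq_int by blast
  consider "j < 0" | "j = 0" | "0 < j"
    by linarith
  then show ?thesis
  proof cases
    case 3
    have "m + 1 = int (Suc k)" "nat j = Suc (nat (j - 1))"
      using 3 by (simp_all add: m)
    with 3 show ?thesis
      by (simp only: binom_int_of_nat m binomial_Suc_Suc) simp
  qed (simp_all add: m binom_int_def)
qed

definition binomial_weight :: "real \<Rightarrow> int \<Rightarrow> int \<Rightarrow> real" where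
  "binomial_weight p m j = binom_int m j * p ^ nat j * (1 - p) ^ nat (m - j)"

lemma binomial_weight_0: "binomial_weight p 0 j = (if j = 0 then 1 else 0)"
  by (simp add: binomial_weight_def binom_int_def)

lemma binomial_weight_plus1:
  assumes "0 \<le> m"
  shows "binomial_weight p (m + 1) j = p * binomial_weight p m (j - 1) + (1 - p) * binomial_weight p m j"
proof -
  have success: "binom_int m (j - 1) * p ^ nat j * (1 - p) ^ nat (m + 1 - j) = p * binomial_weight p m (j - 1)"
  proof (cases "binom_int m (j - 1) = 0")
    case False
    then have "1 \<le> j" "j \<le> m + 1"
      using binom_int_nonzeroD by fastforce+
    then have "nat j = Suc (nat (j - 1))" "nat (m + 1 - j) = nat (m - (j - 1))"
      by simp_all
    then show ?thesis
      by (simp only: binomial_weight_def power_Suc) (simp add: ac_simps)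
  qed (simp add: binomial_weight_def)
  have failure: "binom_int m j * p ^ nat j * (1 - p) ^ nat (m + 1 - j) = (1 - p) * binomial_weight p m j"
  proof (cases "binom_int m j = 0")
    case False
    then have "j \<le> m"
      using binom_int_nonzeroD by fastforce
    then have "nat (m + 1 - j) = Suc (nat (m - j))"
      by simp
    then show ?thesis
      by (simp only: binomial_weight_def power_Suc) (simp add: ac_simps)
  qed (simp add: binomial_weight_def)
  show ?thesis
    unfolding binomial_weight_def[of p "m + 1"] binom_int_plus1[OF assms] distrib_right success failure ..
qed

lemma binom_int_product_eq_binomial_weights:
  "binom_int d a * binom_int (N - d) (b - a) * p ^ nat b * (1 - p) ^ nat (N - b)
    = binomial_weight p d a * binomial_weight p (N - d) (b - a)"
proof (cases "binom_int d a = 0 \<or> binom_int (N - d) (b - a) = 0")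
  case False
  then have "0 \<le> a" "a \<le> d" "0 \<le> b - a" "b - a \<le> N - d"
    using binom_int_nonzeroD by blast+
  then have "nat b = nat a + nat (b - a)" "nat (N - b) = nat (d - a) + nat (N - d - (b - a))"
    by (simp_all add: nat_add_distrib[symmetric])
  then show ?thesis by (simp add: binomial_weight_def power_add)
qed (auto simp: binomial_weight_def)

lemma binomial_weight_pair_step:
  assumes "0 \<le> d" "d \<le> N"
  shows "binomial_weight p (d + of_bool c) a * binomial_weight p (N + 1 - (d + of_bool c)) (b - a)
    = p * (binomial_weight p d (a - of_bool c) * binomial_weight p (N - d) (b - 1 - (a - of_bool c)))
      + (1 - p) * (binomial_weight p d a * binomial_weight p (N - d) (b - a))"
proof (cases c)
  case True
  then have eqs: "d + of_bool c = d + 1" "N + 1 - (d + of_bool c) = N - d" "b - 1 - (a - of_bool c) = b - a"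
      "a - of_bool c = a - 1"
    by simp_all
  show ?thesis
    unfolding eqs binomial_weight_plus1[OF assms(1)] by (simp add: algebra_simps)
next
  case False
  then have eqs: "d + of_bool c = d" "N + 1 - d = (N - d) + 1" "a - of_bool c = a"
      "b - 1 - a = b - a - 1"
    by simp_all
  have "0 \<le> N - d"
    using assms by simp
  show ?thesis
    unfolding eqs binomial_weight_plus1[OF \<open>0 \<le> N - d\<close>] by (simp add: algebra_simps)
qed

section \<open>Counting successes given the at-risk status\<close>

(* A configuration y assigns to unit i the pair (Z_i, C_i >= t); R selects the units whose
   at-risk status is conditioned on, e the observed status. *)
definition status_matches :: "(nat \<Rightarrow> bool) \<Rightarrow> (nat \<Rightarrow> bool) \<Rightarrow> nat \<Rightarrow> (nat \<Rightarrow> bool \<times> bool) \<Rightarrow> bool" where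
  "status_matches R e k y \<longleftrightarrow> (\<forall>i<k. R i \<longrightarrow> snd (y i) = e i)"

definition successes :: "(nat \<Rightarrow> bool) \<Rightarrow> nat \<Rightarrow> (nat \<Rightarrow> bool \<times> bool) \<Rightarrow> nat" where
  "successes S k y = card {i \<in> {..<k}. S i \<and> y i = (True, True)}"

lemma card_lessThan_Suc_filter:
  "card {i \<in> {..<Suc k}. P i} = card {i \<in> {..<k}. P i} + of_bool (P k)"
proof -
  have "{i \<in> {..<Suc k}. P i} = (if P k then insert k {i \<in> {..<k}. P i} else {i \<in> {..<k}. P i})"
    by (auto simp: less_Suc_eq)
  then show ?thesis by simp
qed

lemma status_matches_Suc:
  "status_matches R e (Suc k) y \<longleftrightarrow> status_matches R e k y \<and> (R k \<longrightarrow> snd (y k) = e k)"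
  by (auto simp: status_matches_def less_Suc_eq)

lemma successes_Suc: "successes S (Suc k) y = successes S k y + of_bool (S k \<and> y k = (True, True))"
  unfolding successes_def by (rule card_lessThan_Suc_filter)

lemma status_matches_cong: "(\<And>i. i < k \<Longrightarrow> y i = y' i) \<Longrightarrow> status_matches R e k y = status_matches R e k y'"
  by (simp add: status_matches_def)

lemma successes_cong: "(\<And>i. i < k \<Longrightarrow> y i = y' i) \<Longrightarrow> successes S k y = successes S k y'"
  unfolding successes_def by (intro arg_cong[where f = card]) auto

lemma sum_UNIV_bool_pair:
  "(\<Sum>v\<in>UNIV. f v) = f (True, True) + f (True, False) + f (False, True) + (f (False, False) :: 'a::comm_monoid_add)"
proof -
  have UNIV_eq: "(UNIV :: (bool \<times> bool) set) = {(True, True), (True, False), (False, True), (False, False)}"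
    by auto
  show ?thesis
    unfolding UNIV_eq by (simp add: ac_simps)
qed

lemma (in prob_space) prob_status_successes_total:
  fixes Y :: "nat \<Rightarrow> 'a \<Rightarrow> bool \<times> bool" and R D e :: "nat \<Rightarrow> bool"
  assumes indep: "indep_vars (\<lambda>_. count_space UNIV) Y {..<Suc k}"
  shows "prob {\<omega> \<in> space M. P (status_matches R e k (\<lambda>i. Y i \<omega>))
        (successes D k (\<lambda>i. Y i \<omega>)) (successes R k (\<lambda>i. Y i \<omega>)) (Y k \<omega>)}
      = (\<Sum>v\<in>UNIV. prob {\<omega> \<in> space M. P (status_matches R e k (\<lambda>i. Y i \<omega>))
        (successes D k (\<lambda>i. Y i \<omega>)) (successes R k (\<lambda>i. Y i \<omega>)) v} * prob {\<omega> \<in> space M. Y k \<omega> = v})"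
proof (rule prob_indep_vars_total_probability[OF indep, where J = "{..<k}"])
  fix y y' :: "nat \<Rightarrow> bool \<times> bool" and v
  assume "\<And>i. i \<in> {..<k} \<Longrightarrow> y i = y' i"
  then have "status_matches R e k y = status_matches R e k y'"
      "successes D k y = successes D k y'" "successes R k y = successes R k y'"
    by (simp_all add: status_matches_cong[of k y y'] successes_cong[of k y y'])
  then show "P (status_matches R e k y) (successes D k y) (successes R k y) v
      = P (status_matches R e k y') (successes D k y') (successes R k y') v"
    by simp
qed auto

lemma (in prob_space) prob_status_successes_Suc:
  fixes Y :: "nat \<Rightarrow> 'a \<Rightarrow> bool \<times> bool" and R D e :: "nat \<Rightarrow> bool" and a b :: int
  assumes indep: "indep_vars (\<lambda>_. count_space UNIV) Y {..<Suc k}"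
  shows "prob {\<omega> \<in> space M. status_matches R e (Suc k) (\<lambda>i. Y i \<omega>)
      \<and> int (successes D (Suc k) (\<lambda>i. Y i \<omega>)) = a \<and> int (successes R (Suc k) (\<lambda>i. Y i \<omega>)) = b}
    = (\<Sum>v\<in>UNIV. (if R k \<longrightarrow> snd v = e k then prob {\<omega> \<in> space M. status_matches R e k (\<lambda>i. Y i \<omega>)
        \<and> int (successes D k (\<lambda>i. Y i \<omega>)) = a - of_bool (D k \<and> v = (True, True))
        \<and> int (successes R k (\<lambda>i. Y i \<omega>)) = b - of_bool (R k \<and> v = (True, True))} else 0)
      * prob {\<omega> \<in> space M. Y k \<omega> = v})"
    (is "_ = ?rhs")
proof -
  let ?P = "\<lambda>s c c' v. s \<and> (R k \<longrightarrow> snd v = e k)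
    \<and> int c = a - of_bool (D k \<and> v = (True, True)) \<and> int c' = b - of_bool (R k \<and> v = (True, True))"
  have "prob {\<omega> \<in> space M. status_matches R e (Suc k) (\<lambda>i. Y i \<omega>)
      \<and> int (successes D (Suc k) (\<lambda>i. Y i \<omega>)) = a \<and> int (successes R (Suc k) (\<lambda>i. Y i \<omega>)) = b}
    = prob {\<omega> \<in> space M. ?P (status_matches R e k (\<lambda>i. Y i \<omega>))
        (successes D k (\<lambda>i. Y i \<omega>)) (successes R k (\<lambda>i. Y i \<omega>)) (Y k \<omega>)}"
    by (rule arg_cong[where f = prob]) (auto simp: status_matches_Suc successes_Suc)
  also have "\<dots> = (\<Sum>v\<in>UNIV. prob {\<omega> \<in> space M. ?P (status_matches R e k (\<lambda>i. Y i \<omega>))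
        (successes D k (\<lambda>i. Y i \<omega>)) (successes R k (\<lambda>i. Y i \<omega>)) v} * prob {\<omega> \<in> space M. Y k \<omega> = v})"
    by (rule prob_status_successes_total[OF indep])
  also have "\<dots> = ?rhs"
    by (intro sum.cong refl) simp
  finally show ?thesis .
qed

lemma (in prob_space) prob_status_matches_Suc:
  fixes Y :: "nat \<Rightarrow> 'a \<Rightarrow> bool \<times> bool" and R e :: "nat \<Rightarrow> bool"
  assumes indep: "indep_vars (\<lambda>_. count_space UNIV) Y {..<Suc k}"
  shows "prob {\<omega> \<in> space M. status_matches R e (Suc k) (\<lambda>i. Y i \<omega>)}
    = (\<Sum>v\<in>UNIV. (if R k \<longrightarrow> snd v = e k then prob {\<omega> \<in> space M. status_matches R e k (\<lambda>i. Y i \<omega>)} else 0)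
      * prob {\<omega> \<in> space M. Y k \<omega> = v})"
    (is "_ = ?rhs")
proof -
  let ?P = "\<lambda>s (_::nat) (_::nat) v. s \<and> (R k \<longrightarrow> snd v = e k)"
  have "prob {\<omega> \<in> space M. status_matches R e (Suc k) (\<lambda>i. Y i \<omega>)}
    = prob {\<omega> \<in> space M. ?P (status_matches R e k (\<lambda>i. Y i \<omega>))
        (successes R k (\<lambda>i. Y i \<omega>)) (successes R k (\<lambda>i. Y i \<omega>)) (Y k \<omega>)}"
    by (simp add: status_matches_Suc)
  also have "\<dots> = (\<Sum>v\<in>UNIV. prob {\<omega> \<in> space M. ?P (status_matches R e k (\<lambda>i. Y i \<omega>))
        (successes R k (\<lambda>i. Y i \<omega>)) (successes R k (\<lambda>i. Y i \<omega>)) v} * prob {\<omega> \<in> space M. Y k \<omega> = v})"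
    by (rule prob_status_successes_total[OF indep])
  also have "\<dots> = ?rhs"
    by (intro sum.cong refl) simp
  finally show ?thesis .
qed

(* The new unit k is either not conditioned on (not R), conditioned to be censored before t
   (not e), or it is one more Bernoulli(p) trial among the units at risk: Pascal's rule. *)
lemma binomial_weight_sum_step:
  fixes q :: "bool \<times> bool \<Rightarrow> real"
  assumes q: "q (True, True) = p * (q (True, True) + q (False, True))"
    and d: "0 \<le> d" "d \<le> N" and DR: "D \<longrightarrow> R"
  shows "(\<Sum>v\<in>UNIV. (if R \<longrightarrow> snd v = e then binomial_weight p d (a - of_bool (D \<and> v = (True, True)))
        * binomial_weight p (N - d) (b - of_bool (R \<and> v = (True, True)) - (a - of_bool (D \<and> v = (True, True))))
        * m else 0) * q v)
    = binomial_weight p (d + of_bool (D \<and> e)) a * binomial_weight p (N + of_bool (R \<and> e) - (d + of_bool (D \<and> e))) (b - a)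
      * (\<Sum>v\<in>UNIV. (if R \<longrightarrow> snd v = e then m else 0) * q v)"
proof -
  consider "\<not> R" | "R" "\<not> e" | "R" "e"
    by blast
  then show ?thesis
  proof cases
    case 1
    with DR show ?thesis
      by (simp add: sum_distrib_left sum_distrib_right mult_ac)
  next
    case 2
    then show ?thesis
      by (simp add: sum_UNIV_bool_pair algebra_simps)
  next
    case 3
    define s where "s = q (True, True) + q (False, True)"
    have q_split: "q (True, True) = p * s" "q (False, True) = (1 - p) * s"
      using q by (simp_all add: s_def algebra_simps)
    have weight: "binomial_weight p (d + of_bool (D \<and> e)) a
        * binomial_weight p (N + of_bool (R \<and> e) - (d + of_bool (D \<and> e))) (b - a)
      = p * (binomial_weight p d (a - of_bool D) * binomial_weight p (N - d) (b - 1 - (a - of_bool D)))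
        + (1 - p) * (binomial_weight p d a * binomial_weight p (N - d) (b - a))"
      using binomial_weight_pair_step[OF d, of p D a b] 3 by simp
    show ?thesis
      unfolding weight using 3 by (simp add: sum_UNIV_bool_pair q_split algebra_simps)
  qed
qed

lemma (in prob_space) prob_successes_given_status:
  fixes Y :: "nat \<Rightarrow> 'a \<Rightarrow> bool \<times> bool" and R D e :: "nat \<Rightarrow> bool" and a b :: int
  assumes indep: "indep_vars (\<lambda>_. count_space UNIV) Y {..<n}"
    and success: "\<And>i. i < n \<Longrightarrow> prob {\<omega> \<in> space M. Y i \<omega> = (True, True)}
      = p * (prob {\<omega> \<in> space M. Y i \<omega> = (True, True)} + prob {\<omega> \<in> space M. Y i \<omega> = (False, True)})"
    and DR: "\<And>i. D i \<Longrightarrow> R i"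
  shows "prob {\<omega> \<in> space M. status_matches R e n (\<lambda>i. Y i \<omega>)
      \<and> int (successes D n (\<lambda>i. Y i \<omega>)) = a \<and> int (successes R n (\<lambda>i. Y i \<omega>)) = b}
    = binomial_weight p (card {i \<in> {..<n}. D i \<and> e i}) a
      * binomial_weight p (int (card {i \<in> {..<n}. R i \<and> e i}) - int (card {i \<in> {..<n}. D i \<and> e i})) (b - a)
      * prob {\<omega> \<in> space M. status_matches R e n (\<lambda>i. Y i \<omega>)}"
  using indep success
proof (induction n arbitrary: a b)
  case 0
  have "{\<omega> \<in> space M. 0 = a \<and> 0 = b} = (if a = 0 \<and> b = 0 then space M else {})"
    by auto
  then show ?case
    by (simp add: status_matches_def successes_def binomial_weight_0 prob_space)
next
  case (Suc k)
  have indep_k: "indep_vars (\<lambda>_. count_space UNIV) Y {..<k}"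
    using Suc.prems(1) by (rule indep_vars_subset) auto
  have success_k: "prob {\<omega> \<in> space M. Y i \<omega> = (True, True)}
      = p * (prob {\<omega> \<in> space M. Y i \<omega> = (True, True)} + prob {\<omega> \<in> space M. Y i \<omega> = (False, True)})"
    if "i < k" for i
    using that by (intro Suc.prems(2)) simp
  note IH = Suc.IH[OF indep_k success_k]
  define d where "d = int (card {i \<in> {..<k}. D i \<and> e i})"
  define N where "N = int (card {i \<in> {..<k}. R i \<and> e i})"
  have "0 \<le> d" "d \<le> N"
    using DR by (auto simp: d_def N_def intro!: card_mono)
  have cards: "int (card {i \<in> {..<Suc k}. D i \<and> e i}) = d + of_bool (D k \<and> e k)"
      "int (card {i \<in> {..<Suc k}. R i \<and> e i}) = N + of_bool (R k \<and> e k)"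
    unfolding d_def N_def card_lessThan_Suc_filter by simp_all
  show ?case
    unfolding prob_status_successes_Suc[OF Suc.prems(1)] prob_status_matches_Suc[OF Suc.prems(1)] cards
    using DR[of k]
    by (simp only: IH d_def[symmetric] N_def[symmetric] cong: if_cong)
      (rule binomial_weight_sum_step; use Suc.prems(2)[of k] \<open>0 \<le> d\<close> \<open>d \<le> N\<close> in simp)
qed

section \<open>Censored observations under the null hypothesis\<close>

lemma observed_indicators_iff:
  assumes "0 \<le> T" "0 \<le> t"
  shows "(ennreal T \<le> C \<and> min (ennreal T) C = ennreal t) \<longleftrightarrow> T = t \<and> ennreal t \<le> C"
    and "ennreal t \<le> min (ennreal T) C \<longleftrightarrow> t \<le> T \<and> ennreal t \<le> C"
proof -
  show "(ennreal T \<le> C \<and> min (ennreal T) C = ennreal t) \<longleftrightarrow> T = t \<and> ennreal t \<le> C"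
    using assms by (auto simp: min_def ennreal_le_iff)
  show "ennreal t \<le> min (ennreal T) C \<longleftrightarrow> t \<le> T \<and> ennreal t \<le> C"
    using assms by (simp add: ennreal_le_iff)
qed

definition unit_status :: "(nat \<Rightarrow> 'a \<Rightarrow> ennreal) \<Rightarrow> (nat \<Rightarrow> 'a \<Rightarrow> ennreal) \<Rightarrow> (nat \<Rightarrow> 'a \<Rightarrow> bool)
    \<Rightarrow> real \<Rightarrow> nat \<Rightarrow> 'a \<Rightarrow> bool \<times> bool" where
  "unit_status C1 C0 Z t i \<omega> = (Z i \<omega>, ennreal t \<le> Cobs C1 C0 Z i \<omega>)"

lemma observed_indicators_under_null:
  assumes "0 \<le> T1 i" "T1 i = T0 i" "0 \<le> t"
  shows "Dobs T1 T0 C1 C0 Z i \<omega> \<and> Wobs T1 T0 C1 C0 Z i \<omega> = ennreal t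
      \<longleftrightarrow> T1 i = t \<and> snd (unit_status C1 C0 Z t i \<omega>)"
    and "ennreal t \<le> Wobs T1 T0 C1 C0 Z i \<omega> \<longleftrightarrow> t \<le> T1 i \<and> snd (unit_status C1 C0 Z t i \<omega>)"
  using observed_indicators_iff[OF assms(1,3)] assms(2)
  by (simp_all add: Dobs_def Wobs_def Tobs_def unit_status_def)

lemma observations_under_null:
  assumes "\<forall>i<n. T1 i \<ge> 0 \<and> T0 i \<ge> 0" "\<forall>i<n. T1 i = T0 i" "t \<ge> 0"
  shows "(\<forall>i<n. obs_ind T1 T0 C1 C0 Z t i \<omega> = obs_ind T1 T0 C1 C0 Z t i \<omega>')
      \<longleftrightarrow> status_matches (\<lambda>i. t \<le> T1 i) (\<lambda>i. snd (unit_status C1 C0 Z t i \<omega>')) n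
        (\<lambda>i. unit_status C1 C0 Z t i \<omega>)"
    and "Dbar1 n T1 T0 C1 C0 Z t \<omega> = successes (\<lambda>i. T1 i = t) n (\<lambda>i. unit_status C1 C0 Z t i \<omega>)"
    and "Nbar1 n T1 T0 C1 C0 Z t \<omega> = successes (\<lambda>i. t \<le> T1 i) n (\<lambda>i. unit_status C1 C0 Z t i \<omega>)"
    and "Dbar n T1 T0 C1 C0 Z t \<omega> = card {i \<in> {..<n}. T1 i = t \<and> snd (unit_status C1 C0 Z t i \<omega>)}"
    and "Nbar n T1 T0 C1 C0 Z t \<omega> = card {i \<in> {..<n}. t \<le> T1 i \<and> snd (unit_status C1 C0 Z t i \<omega>)}"
proof -
  have observed:
    "Dobs T1 T0 C1 C0 Z i \<omega> \<and> Wobs T1 T0 C1 C0 Z i \<omega> = ennreal t \<longleftrightarrow> T1 i = t \<and> snd (unit_status C1 C0 Z t i \<omega>)"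
    "ennreal t \<le> Wobs T1 T0 C1 C0 Z i \<omega> \<longleftrightarrow> t \<le> T1 i \<and> snd (unit_status C1 C0 Z t i \<omega>)"
    if "i < n" for i \<omega>
    using observed_indicators_under_null[of T1 i T0 t] assms that by simp_all
  show "(\<forall>i<n. obs_ind T1 T0 C1 C0 Z t i \<omega> = obs_ind T1 T0 C1 C0 Z t i \<omega>')
      \<longleftrightarrow> status_matches (\<lambda>i. t \<le> T1 i) (\<lambda>i. snd (unit_status C1 C0 Z t i \<omega>')) n
        (\<lambda>i. unit_status C1 C0 Z t i \<omega>)"
    by (auto simp: obs_ind_def observed status_matches_def)
  show "Dbar1 n T1 T0 C1 C0 Z t \<omega> = successes (\<lambda>i. T1 i = t) n (\<lambda>i. unit_status C1 C0 Z t i \<omega>)"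
      "Nbar1 n T1 T0 C1 C0 Z t \<omega> = successes (\<lambda>i. t \<le> T1 i) n (\<lambda>i. unit_status C1 C0 Z t i \<omega>)"
      "Dbar n T1 T0 C1 C0 Z t \<omega> = card {i \<in> {..<n}. T1 i = t \<and> snd (unit_status C1 C0 Z t i \<omega>)}"
      "Nbar n T1 T0 C1 C0 Z t \<omega> = card {i \<in> {..<n}. t \<le> T1 i \<and> snd (unit_status C1 C0 Z t i \<omega>)}"
    unfolding Dbar1_def Nbar1_def Dbar_def Nbar_def successes_def
    by (intro arg_cong[where f = card] Collect_cong; use observed in \<open>auto simp: unit_status_def\<close>)+
qed

lemma (in prob_space) G1_G0_eq_prob:
  fixes c1 c0 :: "'a \<Rightarrow> ennreal"
  assumes c: "(\<lambda>\<omega>. (c1 \<omega>, c0 \<omega>)) \<in> measurable M (borel \<Otimes>\<^sub>M borel)"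
    and Q: "distr M (borel \<Otimes>\<^sub>M borel) (\<lambda>\<omega>. (c1 \<omega>, c0 \<omega>)) = Q"
  shows "G1 Q x = prob {\<omega> \<in> space M. x \<le> c1 \<omega>}" and "G0 Q x = prob {\<omega> \<in> space M. x \<le> c0 \<omega>}"
proof -
  have "{p \<in> space (borel \<Otimes>\<^sub>M borel). x \<le> fst p} \<in> sets (borel \<Otimes>\<^sub>M borel :: (ennreal \<times> ennreal) measure)"
    "{p \<in> space (borel \<Otimes>\<^sub>M borel). x \<le> snd p} \<in> sets (borel \<Otimes>\<^sub>M borel :: (ennreal \<times> ennreal) measure)"
    by measurable
  then show "G1 Q x = prob {\<omega> \<in> space M. x \<le> c1 \<omega>}" "G0 Q x = prob {\<omega> \<in> space M. x \<le> c0 \<omega>}"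
    unfolding G1_def G0_def Q[symmetric] using c
    by (simp_all add: measure_distr) (auto simp: space_pair_measure intro!: arg_cong[where f = prob])
qed

lemma (in prob_space) prob_treated_at_risk:
  fixes z :: "'a \<Rightarrow> bool" and c1 c0 :: "'a \<Rightarrow> ennreal"
  assumes z: "z \<in> measurable M (count_space UNIV)" "prob {\<omega> \<in> space M. z \<omega>} = p1"
    and c: "(\<lambda>\<omega>. (c1 \<omega>, c0 \<omega>)) \<in> measurable M (borel \<Otimes>\<^sub>M borel)"
    and Q: "distr M (borel \<Otimes>\<^sub>M borel) (\<lambda>\<omega>. (c1 \<omega>, c0 \<omega>)) = Q"
    and zc: "\<And>a b. b \<in> sets (borel \<Otimes>\<^sub>M borel) \<Longrightarrow>
      prob {\<omega> \<in> space M. z \<omega> \<in> a \<and> (c1 \<omega>, c0 \<omega>) \<in> b}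
      = prob {\<omega> \<in> space M. z \<omega> \<in> a} * prob {\<omega> \<in> space M. (c1 \<omega>, c0 \<omega>) \<in> b}"
  shows "prob {\<omega> \<in> space M. z \<omega> \<and> ennreal t \<le> c1 \<omega>} = phi p1 Q t
    * (prob {\<omega> \<in> space M. z \<omega> \<and> ennreal t \<le> c1 \<omega>} + prob {\<omega> \<in> space M. \<not> z \<omega> \<and> ennreal t \<le> c0 \<omega>})"
proof -
  have [measurable]: "z \<in> measurable M (count_space UNIV)"
    by (fact z(1))
  have "{p \<in> space (borel \<Otimes>\<^sub>M borel). ennreal t \<le> fst p} \<in> sets (borel \<Otimes>\<^sub>M borel :: (ennreal \<times> ennreal) measure)"
    "{p \<in> space (borel \<Otimes>\<^sub>M borel). ennreal t \<le> snd p} \<in> sets (borel \<Otimes>\<^sub>M borel :: (ennreal \<times> ennreal) measure)"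
    by measurable
  then have sets: "{p :: ennreal \<times> ennreal. ennreal t \<le> fst p} \<in> sets (borel \<Otimes>\<^sub>M borel)"
      "{p :: ennreal \<times> ennreal. ennreal t \<le> snd p} \<in> sets (borel \<Otimes>\<^sub>M borel)"
    by (simp_all add: space_pair_measure)
  have "{\<omega> \<in> space M. z \<omega>} \<in> events"
    by measurable
  then have "prob {\<omega> \<in> space M. \<not> z \<omega>} = 1 - p1"
    using prob_neg z(2) by simp
  define \<alpha> where "\<alpha> = prob {\<omega> \<in> space M. z \<omega> \<and> ennreal t \<le> c1 \<omega>}"
  define \<beta> where "\<beta> = prob {\<omega> \<in> space M. \<not> z \<omega> \<and> ennreal t \<le> c0 \<omega>}"
  have "\<alpha> = p1 * G1 Q (ennreal t)" "\<beta> = (1 - p1) * G0 Q (ennreal t)"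
    using zc[of "{p. ennreal t \<le> fst p}" "{True}"] zc[of "{p. ennreal t \<le> snd p}" "{False}"] sets
    by (simp_all add: \<alpha>_def \<beta>_def G1_G0_eq_prob[OF c Q] z(2) \<open>prob {\<omega> \<in> space M. \<not> z \<omega>} = 1 - p1\<close>)
  then have "phi p1 Q t = \<alpha> / (\<alpha> + \<beta>)"
    by (simp add: phi_def)
  \<comment> \<open>if the unit is never at risk, then phi is 0 / 0 = 0 and both sides vanish\<close>
  moreover have "\<alpha> = \<alpha> / (\<alpha> + \<beta>) * (\<alpha> + \<beta>)"
    using measure_nonneg[of M] by (cases "\<alpha> + \<beta> = 0") (auto simp: \<alpha>_def \<beta>_def add_nonneg_eq_0_iff)
  ultimately show ?thesis
    by (simp add: \<alpha>_def \<beta>_def)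
qed

locale randomized_censoring = prob_space M
  for M :: "'a measure" and n :: nat and p1 :: real and Z :: "nat \<Rightarrow> 'a \<Rightarrow> bool"
    and C1 C0 :: "nat \<Rightarrow> 'a \<Rightarrow> ennreal" and Q :: "(ennreal \<times> ennreal) measure" +
  assumes Zmeas: "\<forall>i<n. Z i \<in> measurable M (count_space UNIV)"
    and Zbern: "\<forall>i<n. prob {\<omega> \<in> space M. Z i \<omega>} = p1"
    and Zindep: "indep_vars (\<lambda>_. count_space UNIV) Z {..<n}"
    and Cmeas: "\<forall>i<n. C1 i \<in> borel_measurable M \<and> C0 i \<in> borel_measurable M"
    and Cindep: "indep_vars (\<lambda>_. borel \<Otimes>\<^sub>M borel) (\<lambda>i \<omega>. (C1 i \<omega>, C0 i \<omega>)) {..<n}"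
    and Cident: "\<forall>i<n. distr M (borel \<Otimes>\<^sub>M borel) (\<lambda>\<omega>. (C1 i \<omega>, C0 i \<omega>)) = Q"
    and ZCindep: "\<forall>S \<in> sets (PiM {..<n} (\<lambda>_. count_space UNIV)).
        \<forall>R \<in> sets (PiM {..<n} (\<lambda>_. borel \<Otimes>\<^sub>M borel)).
          prob {\<omega> \<in> space M. (\<lambda>i\<in>{..<n}. Z i \<omega>) \<in> S \<and> (\<lambda>i\<in>{..<n}. (C1 i \<omega>, C0 i \<omega>)) \<in> R}
          = prob {\<omega> \<in> space M. (\<lambda>i\<in>{..<n}. Z i \<omega>) \<in> S}
            * prob {\<omega> \<in> space M. (\<lambda>i\<in>{..<n}. (C1 i \<omega>, C0 i \<omega>)) \<in> R}"
begin

lemma indep_vars_unit_status: "indep_vars (\<lambda>_. count_space UNIV) (unit_status C1 C0 Z t) {..<n}"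
proof -
  have "indep_vars (\<lambda>i. count_space UNIV \<Otimes>\<^sub>M (borel \<Otimes>\<^sub>M borel)) (\<lambda>i \<omega>. (Z i \<omega>, (C1 i \<omega>, C0 i \<omega>))) {..<n}"
    using finite_lessThan Zindep Cindep ZCindep by (rule indep_vars_Pair)
  then have "indep_vars (\<lambda>_. count_space UNIV)
      (\<lambda>i \<omega>. (\<lambda>(z, c). (z, ennreal t \<le> (if z then fst c else snd c))) (Z i \<omega>, (C1 i \<omega>, C0 i \<omega>))) {..<n}"
    by (rule indep_vars_compose2) measurable
  moreover have "(\<lambda>i \<omega>. (\<lambda>(z, c). (z, ennreal t \<le> (if z then fst c else snd c))) (Z i \<omega>, (C1 i \<omega>, C0 i \<omega>)))
      = unit_status C1 C0 Z t"
    by (simp add: fun_eq_iff unit_status_def Cobs_def)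
  ultimately show ?thesis
    by simp
qed

lemma prob_unit_status_treated:
  assumes "i < n"
  shows "prob {\<omega> \<in> space M. unit_status C1 C0 Z t i \<omega> = (True, True)} = phi p1 Q t
    * (prob {\<omega> \<in> space M. unit_status C1 C0 Z t i \<omega> = (True, True)}
      + prob {\<omega> \<in> space M. unit_status C1 C0 Z t i \<omega> = (False, True)})"
proof -
  have "(\<lambda>\<omega>. (C1 i \<omega>, C0 i \<omega>)) \<in> measurable M (borel \<Otimes>\<^sub>M borel)"
    using Cmeas assms by (simp add: measurable_Pair)
  then have "prob {\<omega> \<in> space M. Z i \<omega> \<and> ennreal t \<le> C1 i \<omega>} = phi p1 Q t
    * (prob {\<omega> \<in> space M. Z i \<omega> \<and> ennreal t \<le> C1 i \<omega>} + prob {\<omega> \<in> space M. \<not> Z i \<omega> \<and> ennreal t \<le> C0 i \<omega>})"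
    using Zmeas Zbern Cident assms
    by (intro prob_treated_at_risk prob_component_in_rectangle[OF finite_lessThan Zindep Cindep ZCindep]) auto
  moreover have "{\<omega> \<in> space M. unit_status C1 C0 Z t i \<omega> = (True, True)} = {\<omega> \<in> space M. Z i \<omega> \<and> ennreal t \<le> C1 i \<omega>}"
      "{\<omega> \<in> space M. unit_status C1 C0 Z t i \<omega> = (False, True)} = {\<omega> \<in> space M. \<not> Z i \<omega> \<and> ennreal t \<le> C0 i \<omega>}"
    by (auto simp: unit_status_def Cobs_def)
  ultimately show ?thesis
    by simp
qed

end

theorem lemmaA2:
  fixes M :: "'a measure" and n :: nat and p1 :: real
    and T1 T0 :: "nat \<Rightarrow> real" and Z :: "nat \<Rightarrow> 'a \<Rightarrow> bool"
    and C1 C0 :: "nat \<Rightarrow> 'a \<Rightarrow> ennreal" and Q :: "(ennreal \<times> ennreal) measure"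
    and t :: real and A B :: int and \<omega>0 :: 'a
  assumes P: "prob_space M"
    and p1: "0 < p1" "p1 < 1"
    and Tnonneg: "\<forall>i<n. T1 i \<ge> 0 \<and> T0 i \<ge> 0"
    and H0: "\<forall>i<n. T1 i = T0 i"
    and Zmeas: "\<forall>i<n. Z i \<in> measurable M (count_space UNIV)"
    and Zbern: "\<forall>i<n. measure M {\<omega> \<in> space M. Z i \<omega>} = p1"
    and Zindep: "prob_space.indep_vars M (\<lambda>_. count_space UNIV) Z {..<n}"
    and Cmeas: "\<forall>i<n. C1 i \<in> borel_measurable M \<and> C0 i \<in> borel_measurable M"
    and Cindep: "prob_space.indep_vars M (\<lambda>_. borel \<Otimes>\<^sub>M borel) (\<lambda>i \<omega>. (C1 i \<omega>, C0 i \<omega>)) {..<n}"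
    and Cident: "\<forall>i<n. distr M (borel \<Otimes>\<^sub>M borel) (\<lambda>\<omega>. (C1 i \<omega>, C0 i \<omega>)) = Q"
    and ZCindep: "\<forall>S \<in> sets (PiM {..<n} (\<lambda>_. count_space UNIV)).
        \<forall>R \<in> sets (PiM {..<n} (\<lambda>_. borel \<Otimes>\<^sub>M borel)).
          measure M {\<omega> \<in> space M. (\<lambda>i\<in>{..<n}. Z i \<omega>) \<in> S \<and> (\<lambda>i\<in>{..<n}. (C1 i \<omega>, C0 i \<omega>)) \<in> R}
          = measure M {\<omega> \<in> space M. (\<lambda>i\<in>{..<n}. Z i \<omega>) \<in> S}
            * measure M {\<omega> \<in> space M. (\<lambda>i\<in>{..<n}. (C1 i \<omega>, C0 i \<omega>)) \<in> R}"
    and t: "t \<ge> 0"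
    and \<omega>0: "\<omega>0 \<in> space M"
  shows "measure M {\<omega> \<in> space M.
            (\<forall>i<n. obs_ind T1 T0 C1 C0 Z t i \<omega> = obs_ind T1 T0 C1 C0 Z t i \<omega>0)
            \<and> int (Dbar1 n T1 T0 C1 C0 Z t \<omega>) = A \<and> int (Nbar1 n T1 T0 C1 C0 Z t \<omega>) = B}
    = binom_int (int (Dbar n T1 T0 C1 C0 Z t \<omega>0)) A
      * binom_int (int (Nbar n T1 T0 C1 C0 Z t \<omega>0) - int (Dbar n T1 T0 C1 C0 Z t \<omega>0)) (B - A)
      * (phi p1 Q t) ^ (nat B)
      * (1 - phi p1 Q t) ^ (nat (int (Nbar n T1 T0 C1 C0 Z t \<omega>0) - B))
      * measure M {\<omega> \<in> space M.
            \<forall>i<n. obs_ind T1 T0 C1 C0 Z t i \<omega> = obs_ind T1 T0 C1 C0 Z t i \<omega>0}"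
proof -
  interpret randomized_censoring M n p1 Z C1 C0 Q
    using P Zmeas Zbern Zindep Cmeas Cindep Cident ZCindep
    by (simp add: randomized_censoring_def randomized_censoring_axioms_def)
  have "prob {\<omega> \<in> space M. status_matches (\<lambda>i. t \<le> T1 i) (\<lambda>i. snd (unit_status C1 C0 Z t i \<omega>0)) n
        (\<lambda>i. unit_status C1 C0 Z t i \<omega>)
      \<and> int (successes (\<lambda>i. T1 i = t) n (\<lambda>i. unit_status C1 C0 Z t i \<omega>)) = A
      \<and> int (successes (\<lambda>i. t \<le> T1 i) n (\<lambda>i. unit_status C1 C0 Z t i \<omega>)) = B}
    = binomial_weight (phi p1 Q t) (card {i \<in> {..<n}. T1 i = t \<and> snd (unit_status C1 C0 Z t i \<omega>0)}) A
      * binomial_weight (phi p1 Q t) (int (card {i \<in> {..<n}. t \<le> T1 i \<and> snd (unit_status C1 C0 Z t i \<omega>0)})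
          - int (card {i \<in> {..<n}. T1 i = t \<and> snd (unit_status C1 C0 Z t i \<omega>0)})) (B - A)
      * prob {\<omega> \<in> space M. status_matches (\<lambda>i. t \<le> T1 i) (\<lambda>i. snd (unit_status C1 C0 Z t i \<omega>0)) n
        (\<lambda>i. unit_status C1 C0 Z t i \<omega>)}"
    by (rule prob_successes_given_status[OF indep_vars_unit_status prob_unit_status_treated]) simp_all
  then show ?thesis
    unfolding observations_under_null[OF Tnonneg H0 t] binom_int_product_eq_binomial_weights .
qed

end
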